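(* For any $\zeta\ge1$ there exists an $O(\zeta)$-round deterministic $\mathsf{CONGEST}$ algorithm that lets each vertex $u$ of $G$ compute $f_u^\ast(d)$ for all $d\in[\zeta]=\{1,\dots,\zeta\}$.
   Context: $G=(V,E)$ is an unweighted directed graph with $n=|V|$, also the communication network (communication over edges in both directions). $\mathsf{CONGEST}$: synchronous rounds, each vertex may send an $O(\log n)$-bit message to each neighbour per round, unique identifiers, unlimited local computation. $P=(s=v_0,v_1,\dots,v_{h_{st}}=t)$ is a given shortest $s$-$t$ path; the endpoints of each edge of $P$ know it belongs to $P$ and each $v_i$ knows its index $i$. For a vertex $u$ and integer $d\ge 0$, $f_u^\ast(d)$ is the largest index $j$ such that there exists a path from $u$ to $v_j$ of length exactly $d$ avoiding all edges of $P$; if no such $j$ exists, $f_u^\ast(d)=-\infty$. *)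

theory Defs
  imports Main
begin

text \<open>Graphs: vertices are natural numbers (= unique identifiers), a directed graph is
  a vertex set V and an edge set E with E \<subseteq> V \<times> V. A given path P is a list of vertices.\<close>

definition path_edges :: "nat list \<Rightarrow> (nat \<times> nat) set" where
  "path_edges ps = {(ps ! i, ps ! Suc i) | i. Suc i < length ps}"

text \<open>A walk (sequence of vertices, each consecutive pair an edge of E not in F);
  its length is the number of edges, i.e. length xs - 1.\<close>
definition walk_avoid :: "(nat \<times> nat) set \<Rightarrow> (nat \<times> nat) set \<Rightarrow> nat list \<Rightarrow> bool" where
  "walk_avoid E F xs \<longleftrightarrow> xs \<noteq> [] \<and> (\<forall>i. Suc i < length xs \<longrightarrow> (xs ! i, xs ! Suc i) \<in> E - F)"

definition shortest_path :: "nat set \<Rightarrow> (nat \<times> nat) set \<Rightarrow> nat list \<Rightarrow> bool" where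
  "shortest_path V E ps \<longleftrightarrow> ps \<noteq> [] \<and> set ps \<subseteq> V \<and> distinct ps \<and> walk_avoid E {} ps \<and>
     (\<forall>xs. walk_avoid E {} xs \<and> hd xs = hd ps \<and> last xs = last ps \<longrightarrow> length ps \<le> length xs)"

text \<open>f*_u(d): the largest index j such that some walk of length exactly d from u to v_j
  avoids all edges of P; None encodes -infinity.\<close>
definition fstar :: "(nat \<times> nat) set \<Rightarrow> nat list \<Rightarrow> nat \<Rightarrow> nat \<Rightarrow> nat option" where
  "fstar E ps u d =
    (let Q = (\<lambda>j. j < length ps \<and> (\<exists>xs. walk_avoid E (path_edges ps) xs \<and> length xs = d + 1
                    \<and> hd xs = u \<and> last xs = ps ! j))
     in if \<exists>j. Q j then Some (GREATEST j. Q j) else None)"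

definition nbrs :: "(nat \<times> nat) set \<Rightarrow> nat \<Rightarrow> nat set" where
  "nbrs E u = {w. (u, w) \<in> E \<or> (w, u) \<in> E} - {u}"

record local_input =
  lid :: nat
  out_nbrs :: "nat set"
  in_nbrs :: "nat set"
  P_out :: "nat set"
  P_in :: "nat set"
  P_index :: "nat option"

definition local_of :: "(nat \<times> nat) set \<Rightarrow> nat list \<Rightarrow> nat \<Rightarrow> local_input" where
  "local_of E ps u = \<lparr> lid = u,
     out_nbrs = {w. (u, w) \<in> E}, in_nbrs = {w. (w, u) \<in> E},
     P_out = {w. (u, w) \<in> path_edges ps}, P_in = {w. (w, u) \<in> path_edges ps},
     P_index = (if u \<in> set ps then Some (THE j. j < length ps \<and> ps ! j = u) else None) \<rparr>"

text \<open>Local states are natural numbers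
  (any finite information can be encoded; local computation is unrestricted).
  send st w: message (a natural number, or none) sent to neighbour w;
  trans st rcv: new state given the messages received from each neighbour;
  result st d: the vertex's output value for argument d.\<close>
record algorithm =
  init :: "local_input \<Rightarrow> nat"
  send :: "nat \<Rightarrow> nat \<Rightarrow> nat option"
  trans :: "nat \<Rightarrow> (nat \<Rightarrow> nat option) \<Rightarrow> nat"
  result :: "nat \<Rightarrow> nat \<Rightarrow> nat option"

fun run :: "algorithm \<Rightarrow> (nat \<times> nat) set \<Rightarrow> nat list \<Rightarrow> nat \<Rightarrow> nat \<Rightarrow> nat" where
  "run A E ps 0 u = init A (local_of E ps u)"
| "run A E ps (Suc r) u =
     trans A (run A E ps r u)
       (\<lambda>w. if w \<in> nbrs E u then send A (run A E ps r w) u else None)"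

text \<open>CONGEST bandwidth: during the first R rounds every message is a number below
  (n+1)^B, i.e. has O(log n) bits.\<close>
definition congest_bounded :: "algorithm \<Rightarrow> nat set \<Rightarrow> (nat \<times> nat) set \<Rightarrow> nat list \<Rightarrow> nat \<Rightarrow> nat \<Rightarrow> bool" where
  "congest_bounded A V E ps R B \<longleftrightarrow>
     (\<forall>r < R. \<forall>u \<in> V. \<forall>w \<in> nbrs E u. \<forall>m.
        send A (run A E ps r u) w = Some m \<longrightarrow> m < (card V + 1) ^ B)"

end

theory Submission
  imports Defs "HOL-Library.Countable"
begin

text \<open>A walk of length d+1 from u avoiding P consists of an edge (u,w) off P followed by a
  walk of length d from w, so f*_u(d+1) is the maximum of f*_w(d) over these w, and
  f*_u(0) is the index of u on P. Hence if in round r every vertex sends f*(r) to its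
  neighbours, after r rounds each vertex knows f*(0), ..., f*(r). Every message is an index
  on P, a number below n of O(log n) bits, and one round per value of d suffices.\<close>

definition Max_opt :: "'a::linorder set \<Rightarrow> 'a option" where
  "Max_opt M = (if M = {} then None else Some (Max M))"

lemma Max_opt_SomeD: "finite M \<Longrightarrow> Max_opt M = Some m \<Longrightarrow> m \<in> M"
  unfolding Max_opt_def by (metis Max_in option.distinct(1) option.inject)

lemma Max_opt_UN:
  assumes fin: "finite (\<Union>i\<in>I. A i)"
  shows "Max_opt (\<Union>i\<in>I. A i) = Max_opt (\<Union>i\<in>I. set_option (Max_opt (A i)))"
    (is "Max_opt ?U = Max_opt ?M")
proof -
  have finA: "finite (A i)" if "i \<in> I" for i
    using finite_subset[OF UN_upper[OF that] fin] .
  have "?M \<subseteq> ?U"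
    using Max_opt_SomeD[OF finA] by fastforce
  moreover have "?M = {} \<longleftrightarrow> ?U = {}"
    by (auto simp: Max_opt_def)
  moreover have "Max ?U \<le> Max ?M" if ne: "?U \<noteq> {}"
  proof -
    obtain i where i: "i \<in> I" "Max ?U \<in> A i"
      using Max_in[OF fin ne] by blast
    have "Max (A i) \<in> ?M" using i by (auto simp: Max_opt_def)
    then have "Max (A i) \<le> Max ?M"
      using \<open>?M \<subseteq> ?U\<close> fin by (simp add: finite_subset)
    moreover have "Max ?U \<le> Max (A i)" using i finA by simp
    ultimately show ?thesis by simp
  qed
  ultimately show ?thesis
    using Max_mono[OF \<open>?M \<subseteq> ?U\<close> _ fin] by (simp add: Max_opt_def antisym)
qed

definition walk_targets :: "(nat \<times> nat) set \<Rightarrow> (nat \<times> nat) set \<Rightarrow> nat \<Rightarrow> nat \<Rightarrow> nat set" where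
  "walk_targets E F u d = {last xs | xs. walk_avoid E F xs \<and> length xs = d + 1 \<and> hd xs = u}"

lemma walk_avoid_Cons:
  "walk_avoid E F (u # ys) \<longleftrightarrow> ys = [] \<or> ((u, hd ys) \<in> E - F \<and> walk_avoid E F ys)"
proof (cases ys)
  case (Cons y zs)
  have "(\<forall>i. Suc i < Suc (length ys) \<longrightarrow> P i) \<longleftrightarrow> P 0 \<and> (\<forall>i. Suc i < length ys \<longrightarrow> P (Suc i))" for P
    using Cons by (auto simp: less_Suc_eq_0_disj)
  then show ?thesis using Cons by (simp add: walk_avoid_def)
qed (simp add: walk_avoid_def)

lemma walk_targets_0: "walk_targets E F u 0 = {u}"
proof -
  have "walk_avoid E F [u]" by (simp add: walk_avoid_def)
  then show ?thesis
    unfolding walk_targets_def by (auto simp: length_Suc_conv) force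
qed

lemma walk_targets_Suc:
  "walk_targets E F u (Suc d) = (\<Union>w \<in> (E - F) `` {u}. walk_targets E F w d)"
proof (intro equalityI subsetI)
  fix v assume "v \<in> walk_targets E F u (Suc d)"
  then obtain ys where ys: "walk_avoid E F (u # ys)" "length ys = Suc d" "last ys = v"
    unfolding walk_targets_def by (auto simp: length_Suc_conv)
  then have "(u, hd ys) \<in> E - F" "v \<in> walk_targets E F (hd ys) d"
    unfolding walk_targets_def by (auto simp: walk_avoid_Cons)
  then show "v \<in> (\<Union>w \<in> (E - F) `` {u}. walk_targets E F w d)"
    by blast
next
  fix v assume "v \<in> (\<Union>w \<in> (E - F) `` {u}. walk_targets E F w d)"
  then obtain ys where "(u, hd ys) \<in> E - F" "walk_avoid E F ys" "length ys = d + 1" "last ys = v"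
    unfolding walk_targets_def by blast
  then show "v \<in> walk_targets E F u (Suc d)"
    unfolding walk_targets_def
    by (intro CollectI exI[of _ "u # ys"]) (auto simp: walk_avoid_Cons)
qed

lemma fstar_eq_Max_opt:
  "fstar E ps u d = Max_opt {j. j < length ps \<and> ps ! j \<in> walk_targets E (path_edges ps) u d}"
  (is "_ = Max_opt ?J")
proof -
  have pred: "(\<lambda>j. j < length ps \<and> (\<exists>xs. walk_avoid E (path_edges ps) xs \<and> length xs = d + 1
                  \<and> hd xs = u \<and> last xs = ps ! j)) = (\<lambda>j. j \<in> ?J)"
    unfolding walk_targets_def by (rule ext) (auto simp: eq_commute[of "ps ! _"])
  have "fstar E ps u d = (if \<exists>j. j \<in> ?J then Some (GREATEST j. j \<in> ?J) else None)"
    unfolding fstar_def pred Let_def ..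
  moreover have "finite ?J" by simp
  ultimately show ?thesis
    using Greatest_Max[of "\<lambda>j. j \<in> ?J"] by (simp add: Max_opt_def)
qed

lemma fstar_less_length:
  assumes "fstar E ps u d = Some j"
  shows "j < length ps"
proof -
  have "j \<in> {j. j < length ps \<and> ps ! j \<in> walk_targets E (path_edges ps) u d}"
    by (rule Max_opt_SomeD) (use assms in \<open>simp_all add: fstar_eq_Max_opt\<close>)
  then show ?thesis by simp
qed

lemma fstar_0:
  assumes "distinct ps"
  shows "fstar E ps u 0 = P_index (local_of E ps u)"
proof (cases "u \<in> set ps")
  case True
  then obtain i where i: "i < length ps" "ps ! i = u" by (auto simp: in_set_conv_nth)
  have index_iff: "j < length ps \<and> ps ! j = u \<longleftrightarrow> j = i" for j
    using i assms nth_eq_iff_index_eq by blast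
  then have "(THE j. j < length ps \<and> ps ! j = u) = i" by auto
  with True index_iff show ?thesis
    by (simp add: fstar_eq_Max_opt walk_targets_0 local_of_def Max_opt_def)
next
  case False
  then show ?thesis
    by (auto simp: fstar_eq_Max_opt walk_targets_0 local_of_def Max_opt_def)
qed

lemma fstar_Suc:
  "fstar E ps u (Suc d) =
     Max_opt (\<Union>w \<in> (E - path_edges ps) `` {u}. set_option (fstar E ps w d))"
proof -
  let ?I = "\<lambda>w. {j. j < length ps \<and> ps ! j \<in> walk_targets E (path_edges ps) w d}"
  have "{j. j < length ps \<and> ps ! j \<in> walk_targets E (path_edges ps) u (Suc d)}
          = (\<Union>w \<in> (E - path_edges ps) `` {u}. ?I w)"
    by (auto simp: walk_targets_Suc)
  moreover have "finite (\<Union>w \<in> (E - path_edges ps) `` {u}. ?I w)"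
    by (rule finite_subset[of _ "{..<length ps}"]) auto
  ultimately show ?thesis
    by (simp add: fstar_eq_Max_opt Max_opt_UN)
qed

type_synonym fstar_state = "nat \<times> nat option list \<times> nat list"

text \<open>A state (u, [f*_u(0), ..., f*_u(r)], ws), with ws the heads of the edges leaving u
  off P, is stored as its code under to_nat. A self-loop at u is not a
  communication edge, so u then reads its own previous value instead of a message.\<close>

definition fstar_alg :: algorithm where
  "fstar_alg = \<lparr>
     init = \<lambda>li. to_nat (lid li, [P_index li], sorted_list_of_set (out_nbrs li - P_out li)),
     send = \<lambda>s w. last (fst (snd (from_nat s :: fstar_state))),
     trans = \<lambda>s rcv. (case from_nat s :: fstar_state of (u, h, ws) \<Rightarrow>
       to_nat (u, h @ [Max_opt (\<Union>w \<in> set ws. set_option (if w = u then last h else rcv w))], ws)),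
     result = \<lambda>s d. fst (snd (from_nat s :: fstar_state)) ! d \<rparr>"

lemma run_fstar_alg:
  assumes "finite E" and "distinct ps"
  shows "(from_nat (run fstar_alg E ps r u) :: fstar_state) =
           (u, map (fstar E ps u) [0..<Suc r], sorted_list_of_set ((E - path_edges ps) `` {u}))"
proof (induction r arbitrary: u)
  case 0
  have "{w. (u, w) \<in> E} - {w. (u, w) \<in> path_edges ps} = (E - path_edges ps) `` {u}"
    by auto
  then show ?case
    using fstar_0[OF assms(2)] by (simp add: fstar_alg_def local_of_def)
next
  case (Suc r)
  let ?W = "(E - path_edges ps) `` {u}"
  let ?h = "map (fstar E ps u) [0..<Suc r]"
  let ?rcv = "\<lambda>w. if w \<in> nbrs E u then send fstar_alg (run fstar_alg E ps r w) u else None"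
  have "finite ?W" using assms(1) by (simp add: finite_Image)
  moreover have "?rcv w = fstar E ps w r" if "w \<in> ?W" "w \<noteq> u" for w
    using that Suc.IH[of w] by (auto simp: fstar_alg_def nbrs_def)
  ultimately have received: "(\<Union>w \<in> ?W. set_option (if w = u then last ?h else ?rcv w))
      = (\<Union>w \<in> ?W. set_option (fstar E ps w r))"
    by (intro SUP_cong) auto
  have "run fstar_alg E ps (Suc r) u = trans fstar_alg (run fstar_alg E ps r u) ?rcv"
    by simp
  also have "\<dots> = to_nat (u, ?h @ [Max_opt (\<Union>w \<in> ?W. set_option (if w = u then last ?h else ?rcv w))],
      sorted_list_of_set ?W)"
    using Suc.IH[of u] \<open>finite ?W\<close> by (simp add: fstar_alg_def del: upt_Suc)
  also have "\<dots> = to_nat (u, map (fstar E ps u) [0..<Suc (Suc r)], sorted_list_of_set ?W)"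
    unfolding received by (simp add: fstar_Suc)
  finally show ?case by simp
qed

lemma fstar_alg_result:
  assumes "finite E" "distinct ps" "d \<le> r"
  shows "result fstar_alg (run fstar_alg E ps r u) d = fstar E ps u d"
  using run_fstar_alg[OF assms(1,2), of r u] assms(3)
  by (simp add: fstar_alg_def nth_append del: upt_Suc)

lemma fstar_alg_congest_bounded:
  assumes "finite V" "E \<subseteq> V \<times> V" "distinct ps" "set ps \<subseteq> V"
  shows "congest_bounded fstar_alg V E ps R 1"
  unfolding congest_bounded_def
proof (intro allI impI ballI)
  fix r u w m
  assume "send fstar_alg (run fstar_alg E ps r u) w = Some m"
  moreover have "finite E" using assms(1,2) finite_subset by blast
  ultimately have "fstar E ps u r = Some m"
    using run_fstar_alg[where r = r and u = u] assms(3) by (simp add: fstar_alg_def)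
  then have "m < length ps" by (rule fstar_less_length)
  also have "length ps \<le> card V"
    using distinct_card[OF assms(3)] card_mono[OF assms(1,4)] by simp
  finally show "m < (card V + 1) ^ 1" by simp
qed

theorem lemma4p2:
  shows "\<forall>K::nat. \<exists>(c::nat) (B::nat). \<forall>\<zeta>::nat. \<zeta> \<ge> 1 \<longrightarrow> (\<exists>A::algorithm.
     \<forall>(V::nat set) (E::(nat \<times> nat) set) (ps::nat list).
       finite V \<and> V \<subseteq> {..< card V ^ K} \<and> E \<subseteq> V \<times> V \<and> shortest_path V E ps \<longrightarrow>
       congest_bounded A V E ps (c * \<zeta>) B \<and>
       (\<forall>u \<in> V. \<forall>d \<in> {1..\<zeta>}. result A (run A E ps (c * \<zeta>) u) d = fstar E ps u d))"
proof (intro allI exI[of _ "1::nat"] impI exI[of _ fstar_alg])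
  fix K \<zeta> V E ps
  assume "finite V \<and> V \<subseteq> {..< card V ^ K} \<and> E \<subseteq> V \<times> V \<and> shortest_path V E ps"
  then have V: "finite V" and E: "E \<subseteq> V \<times> V" and P: "distinct ps" "set ps \<subseteq> V"
    by (auto simp: shortest_path_def)
  then have "finite E" using finite_subset by blast
  then show "congest_bounded fstar_alg V E ps (1 * \<zeta>) 1 \<and>
      (\<forall>u \<in> V. \<forall>d \<in> {1..\<zeta>}. result fstar_alg (run fstar_alg E ps (1 * \<zeta>) u) d = fstar E ps u d)"
    using fstar_alg_congest_bounded[OF V E P] fstar_alg_result[OF _ P(1)] by simp
qed

end
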